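(* Fix $H\in(3/4,1)$, $\mu\in\mathbb{R}$, $\sigma>0$. For $\alpha>0$ let $Q^{\alpha}$ be the law on $\mathcal{C}[0,1]$ of $\alpha Z^H_t+B_t$, $t\in[0,1]$, where $B$ is a standard Brownian motion and $Z^H$ an independent fractional Brownian motion with Hurst parameter $H$, and let $Q_{\mu\alpha/\sigma}$ be the law on $\mathcal{C}[0,1]$ of $W_t-\frac{\mu\alpha}{\sigma}t$, $W$ a standard Brownian motion. For $n\ge1$ let $Y_n(\omega)=(\omega(\tfrac1n)-\omega(0),\dots,\omega(1)-\omega(\tfrac{n-1}n))^T$ and let $Q^{\alpha,n}$, $Q^n_{\mu\alpha/\sigma}$ be the restrictions of $Q^\alpha$, $Q_{\mu\alpha/\sigma}$ to $\sigma(Y_n)$. Then for every $n>1$, $$\lim_{\alpha\to\infty}H\big(Q^{\alpha,n}\,|\,Q^n_{\mu\alpha/\sigma}\big)=\infty.$$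
   Context: $H(Q_1|Q_2)$ denotes the relative entropy of $Q_1$ with respect to $Q_2$: the supremum over finite measurable partitions $\{F_j\}$ of $\sum_j Q_1(F_j)\ln(Q_1(F_j)/Q_2(F_j))$; when $Q_1\ll Q_2$ it equals $E_{Q_1}[\ln\frac{dQ_1}{dQ_2}]$. A fractional Brownian motion with Hurst parameter $H$ is a continuous centred Gaussian process with covariance $\frac12(t^{2H}+s^{2H}-|t-s|^{2H})$. *)

theory Defs
  imports "HOL-Probability.Probability"
begin

(* Only finitely many coordinates enter sigma(Y_n), so restricting the
   law on C[0,1] to sigma(Y_n) gives the same measure as here. *)
definition path_space :: "(real \<Rightarrow> real) measure" where
  "path_space = PiM {0..1} (\<lambda>_. borel)"

definition incr_vec :: "nat \<Rightarrow> (real \<Rightarrow> real) \<Rightarrow> (nat \<Rightarrow> real)" where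
  "incr_vec n \<omega> = (\<lambda>i\<in>{..<n}. \<omega> (real (Suc i) / real n) - \<omega> (real i / real n))"

definition incr_sigma :: "nat \<Rightarrow> (real \<Rightarrow> real) measure" where
  "incr_sigma n = vimage_algebra (space path_space) (incr_vec n) (PiM {..<n} (\<lambda>_. borel))"

definition kl_term :: "real \<Rightarrow> real \<Rightarrow> ereal" where
  "kl_term p q = (if p = 0 then 0 else if q = 0 then \<infinity> else ereal (p * ln (p / q)))"

definition finite_meas_partition :: "'a measure \<Rightarrow> 'a set set \<Rightarrow> bool" where
  "finite_meas_partition M P \<longleftrightarrow> finite P \<and> P \<subseteq> sets M \<and> disjoint P \<and> \<Union>P = space M"

definition rel_entropy :: "'a measure \<Rightarrow> 'a measure \<Rightarrow> ereal" where
  "rel_entropy Q1 Q2 = (SUP P \<in> {P. finite_meas_partition Q1 P}.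
       \<Sum>F\<in>P. kl_term (measure Q1 F) (measure Q2 F))"

definition centered_gaussian_process ::
  "'a measure \<Rightarrow> real set \<Rightarrow> (real \<Rightarrow> 'a \<Rightarrow> real) \<Rightarrow> (real \<Rightarrow> real \<Rightarrow> real) \<Rightarrow> bool" where
  "centered_gaussian_process M T X K \<longleftrightarrow>
     (\<forall>t\<in>T. X t \<in> borel_measurable M) \<and>
     (\<forall>I c. finite I \<and> I \<subseteq> T \<longrightarrow>
        (let Y = (\<lambda>\<omega>. \<Sum>t\<in>I. c t * X t \<omega>);
             v = (\<Sum>s\<in>I. \<Sum>t\<in>I. c s * c t * K s t)
         in if v = 0 then (AE \<omega> in M. Y \<omega> = 0)
            else distributed M lborel Y (normal_density 0 (sqrt v))))"

definition continuous_paths :: "'a measure \<Rightarrow> (real \<Rightarrow> 'a \<Rightarrow> real) \<Rightarrow> bool" where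
  "continuous_paths M X \<longleftrightarrow> (\<forall>\<omega>\<in>space M. continuous_on {0..1} (\<lambda>t. X t \<omega>))"

definition std_BM :: "'a measure \<Rightarrow> (real \<Rightarrow> 'a \<Rightarrow> real) \<Rightarrow> bool" where
  "std_BM M B \<longleftrightarrow> centered_gaussian_process M {0..1} B (\<lambda>s t. min s t) \<and> continuous_paths M B"

definition fBM :: "real \<Rightarrow> 'a measure \<Rightarrow> (real \<Rightarrow> 'a \<Rightarrow> real) \<Rightarrow> bool" where
  "fBM H M Z \<longleftrightarrow> centered_gaussian_process M {0..1} Z
      (\<lambda>s t. (t powr (2*H) + s powr (2*H) - \<bar>t - s\<bar> powr (2*H)) / 2) \<and> continuous_paths M Z"

definition path_of :: "(real \<Rightarrow> 'a \<Rightarrow> real) \<Rightarrow> 'a \<Rightarrow> (real \<Rightarrow> real)" where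
  "path_of X \<omega> = (\<lambda>t\<in>{0..1}. X t \<omega>)"

end

theory Submission
  imports Defs
begin

text \<open>
  Let \<open>h = 1/n\<close> and consider the event that the first increment, shifted by
  \<open>\<mu>\<alpha>h/\<sigma>\<close>, exceeds \<open>\<surd>\<alpha>\<close> in modulus; it lies in \<open>\<sigma>(Y\<^sub>n)\<close>.
  Under the drifted Brownian motion the shift cancels the drift, so the event has
  probability \<open>P(|W\<^sub>h - W\<^sub>0| > \<surd>\<alpha>) \<rightarrow> 0\<close>. Under \<open>\<alpha>Z + B\<close> the shifted
  increment is \<open>\<alpha>(\<Delta>Z + \<mu>h/\<sigma>) + \<Delta>B\<close>; the nondegenerate Gaussian \<open>\<Delta>Z\<close> has
  no atom at \<open>-\<mu>h/\<sigma>\<close>, so with probability tending to 1 the first term exceeds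
  \<open>2\<surd>\<alpha>\<close> while \<open>|\<Delta>B| \<le> \<surd>\<alpha>\<close>. The partition into this event and its
  complement bounds the relative entropy below by \<open>p ln (p/q) - 1 \<rightarrow> \<infinity>\<close>.
  Only the law of the first increment enters.
\<close>

lemma kl_term_ge_minus_one:
  assumes "0 \<le> p" "0 \<le> q" "q \<le> 1"
  shows "- 1 \<le> kl_term p q"
proof (cases "p = 0 \<or> q = 0")
  case True
  then show ?thesis by (auto simp: kl_term_def)
next
  case False
  with assms have "0 < p" "0 < q" by auto
  have "1 - q / p \<le> ln (p / q)"
    using ln_le_minus_one[of "q / p"] \<open>0 < p\<close> \<open>0 < q\<close> by (simp add: ln_div)
  then have "p * (1 - q / p) \<le> p * ln (p / q)"
    using \<open>0 < p\<close> by (intro mult_left_mono) auto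
  moreover have "p * (1 - q / p) = p - q" using \<open>0 < p\<close> by (simp add: field_simps)
  ultimately have "- 1 \<le> p * ln (p / q)" using assms by linarith
  then show ?thesis using False by (simp add: kl_term_def one_ereal_def)
qed

lemma kl_term_ge:
  assumes "0 < c" "c \<le> p" "0 \<le> q" "q < c * exp (- K / c)" "0 \<le> K"
  shows "ereal K \<le> kl_term p q"
proof (cases "q = 0")
  case True
  then show ?thesis using assms by (auto simp: kl_term_def)
next
  case False
  with assms have "0 < q" by auto
  have "q < p * exp (- K / c)"
    using assms by (meson exp_gt_zero less_le_trans mult_right_mono less_imp_le)
  then have "exp (K / c) < p / q"
    using \<open>0 < q\<close> by (simp add: exp_minus field_simps)
  then have "K / c < ln (p / q)"
    by (metis exp_gt_zero less_trans ln_exp ln_less_cancel_iff)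
  then have "c * (K / c) \<le> p * ln (p / q)"
    using assms by (intro mult_mono) auto
  then show ?thesis using assms \<open>0 < q\<close> by (simp add: kl_term_def)
qed

lemma rel_entropy_ge_kl_term:
  assumes "A \<in> sets Q1" "prob_space Q2"
  shows "kl_term (measure Q1 A) (measure Q2 A) - 1 \<le> rel_entropy Q1 Q2"
proof -
  define P where "P = {A, space Q1 - A}"
  have partition: "finite_meas_partition Q1 P"
    using assms(1) sets.sets_into_space[OF assms(1)]
    by (auto simp: P_def finite_meas_partition_def disjoint_def disjnt_def)
  have "kl_term (measure Q1 A) (measure Q2 A) - 1 \<le> (\<Sum>F\<in>P. kl_term (measure Q1 F) (measure Q2 F))"
  proof (cases "A = space Q1 - A")
    case True
    then have "A = {}" "P = {{}}" by (auto simp: P_def)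
    then show ?thesis by (simp add: kl_term_def)
  next
    case False
    have "- 1 \<le> kl_term (measure Q1 (space Q1 - A)) (measure Q2 (space Q1 - A))"
      using prob_space.prob_le_1[OF assms(2)] by (intro kl_term_ge_minus_one) auto
    then show ?thesis using False
      by (simp add: P_def minus_ereal_def add_left_mono)
  qed
  also have "\<dots> \<le> rel_entropy Q1 Q2"
    unfolding rel_entropy_def using partition by (intro SUP_upper) auto
  finally show ?thesis .
qed

lemma rel_entropy_tendsto_PInfty:
  assumes "0 < c"
    and "\<forall>\<^sub>F \<alpha> in F. A \<alpha> \<in> sets (Q1 \<alpha>) \<and> prob_space (Q2 \<alpha>) \<and> c \<le> measure (Q1 \<alpha>) (A \<alpha>)"
    and "((\<lambda>\<alpha>. measure (Q2 \<alpha>) (A \<alpha>)) \<longlongrightarrow> 0) F"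
  shows "((\<lambda>\<alpha>. rel_entropy (Q1 \<alpha>) (Q2 \<alpha>)) \<longlongrightarrow> \<infinity>) F"
  unfolding tendsto_PInfty
proof
  fix r :: real
  define K where "K = max r 0 + 2"
  have "0 < c * exp (- K / c)" using \<open>0 < c\<close> by simp
  with assms(3) have "\<forall>\<^sub>F \<alpha> in F. measure (Q2 \<alpha>) (A \<alpha>) < c * exp (- K / c)"
    by (rule order_tendstoD(2))
  with assms(2) show "\<forall>\<^sub>F \<alpha> in F. ereal r < rel_entropy (Q1 \<alpha>) (Q2 \<alpha>)"
  proof eventually_elim
    case (elim \<alpha>)
    then have "ereal K \<le> kl_term (measure (Q1 \<alpha>) (A \<alpha>)) (measure (Q2 \<alpha>) (A \<alpha>))"
      using \<open>0 < c\<close> by (intro kl_term_ge) (auto simp: K_def)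
    then have "ereal K - 1 \<le> rel_entropy (Q1 \<alpha>) (Q2 \<alpha>)"
      using rel_entropy_ge_kl_term[of "A \<alpha>" "Q1 \<alpha>" "Q2 \<alpha>"] elim
      by (meson ereal_minus_mono order.refl order_trans)
    moreover have "ereal r < ereal K - 1" by (simp add: K_def one_ereal_def)
    ultimately show ?case by order
  qed
qed

lemma (in prob_space) cdf_distr:
  assumes "f \<in> borel_measurable M"
  shows "cdf (distr M borel f) t = prob {\<omega> \<in> space M. f \<omega> \<le> t}"
  using assms by (simp add: cdf_def measure_distr vimage_def Int_def conj_commute)

lemma (in prob_space) prob_abs_gt_tendsto_0:
  fixes X :: "'a \<Rightarrow> real"
  assumes [measurable]: "X \<in> borel_measurable M"
  shows "((\<lambda>t. prob {\<omega> \<in> space M. t < \<bar>X \<omega>\<bar>}) \<longlongrightarrow> 0) at_top"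
proof -
  let ?D = "distr M (borel :: real measure) (\<lambda>\<omega>. \<bar>X \<omega>\<bar>)"
  interpret D: real_distribution ?D by simp
  have "prob {\<omega> \<in> space M. t < \<bar>X \<omega>\<bar>} = 1 - cdf ?D t" for t
    by (subst cdf_distr) (auto simp: not_less prob_compl[symmetric] intro!: arg_cong[where f=prob])
  moreover have "((\<lambda>t. 1 - cdf ?D t) \<longlongrightarrow> 1 - 1) at_top"
    by (intro tendsto_diff tendsto_const D.cdf_lim_at_top_prob)
  ultimately show ?thesis by simp
qed

lemma (in prob_space) prob_abs_diff_le_tendsto:
  fixes X :: "'a \<Rightarrow> real"
  assumes [measurable]: "X \<in> borel_measurable M"
  shows "((\<lambda>e. prob {\<omega> \<in> space M. \<bar>X \<omega> - c\<bar> \<le> e}) \<longlongrightarrow> prob {\<omega> \<in> space M. X \<omega> = c}) (at_right 0)"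
proof -
  let ?D = "distr M (borel :: real measure) (\<lambda>\<omega>. \<bar>X \<omega> - c\<bar>)"
  interpret D: real_distribution ?D by simp
  have "(cdf ?D \<longlongrightarrow> cdf ?D 0) (at_right 0)"
    using D.cdf_is_right_cont by (simp add: continuous_within)
  moreover have "cdf ?D = (\<lambda>e. prob {\<omega> \<in> space M. \<bar>X \<omega> - c\<bar> \<le> e})"
    by (simp add: fun_eq_iff cdf_distr)
  ultimately show ?thesis by (simp add: cdf_distr)
qed

lemma (in prob_space) prob_sqrt_less_abs_scale_add_tendsto_1:
  fixes X Y :: "'a \<Rightarrow> real"
  assumes [measurable]: "X \<in> borel_measurable M" "Y \<in> borel_measurable M"
    and "prob {\<omega> \<in> space M. X \<omega> = c} = 0"
  shows "((\<lambda>\<alpha>. prob {\<omega> \<in> space M. sqrt \<alpha> < \<bar>\<alpha> * (X \<omega> - c) + Y \<omega>\<bar>}) \<longlongrightarrow> 1) at_top"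
proof (rule tendsto_sandwich)
  define small_X where "small_X \<alpha> = {\<omega> \<in> space M. \<bar>X \<omega> - c\<bar> \<le> 2 / sqrt \<alpha>}" for \<alpha>
  define large_Y where "large_Y \<alpha> = {\<omega> \<in> space M. sqrt \<alpha> < \<bar>Y \<omega>\<bar>}" for \<alpha>
  have "filterlim (\<lambda>\<alpha>. 2 / sqrt \<alpha>) (at_right 0) at_top"
    using filterlim_compose[OF filterlim_inverse_at_right_top
        filterlim_tendsto_pos_mult_at_top[OF tendsto_const _ sqrt_at_top, of "1/2"]]
    by (simp add: field_simps)
  then have "((\<lambda>\<alpha>. prob (small_X \<alpha>)) \<longlongrightarrow> 0) at_top"
    unfolding small_X_def using prob_abs_diff_le_tendsto[of X c] assms(3)
    by (auto intro: filterlim_compose)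
  moreover have "((\<lambda>\<alpha>. prob (large_Y \<alpha>)) \<longlongrightarrow> 0) at_top"
    unfolding large_Y_def by (rule filterlim_compose[OF prob_abs_gt_tendsto_0 sqrt_at_top]) fact
  ultimately show "((\<lambda>\<alpha>. 1 - prob (small_X \<alpha>) - prob (large_Y \<alpha>)) \<longlongrightarrow> 1) at_top"
    using tendsto_diff[OF tendsto_diff[OF tendsto_const]] by fastforce
  show "\<forall>\<^sub>F \<alpha> in at_top. 1 - prob (small_X \<alpha>) - prob (large_Y \<alpha>)
          \<le> prob {\<omega> \<in> space M. sqrt \<alpha> < \<bar>\<alpha> * (X \<omega> - c) + Y \<omega>\<bar>}"
    using eventually_gt_at_top[of 0]
  proof eventually_elim
    case (elim \<alpha>)
    have "space M - (small_X \<alpha> \<union> large_Y \<alpha>) \<subseteq> {\<omega> \<in> space M. sqrt \<alpha> < \<bar>\<alpha> * (X \<omega> - c) + Y \<omega>\<bar>}"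
    proof safe
      fix \<omega> assume "\<omega> \<in> space M" "\<omega> \<notin> small_X \<alpha>" "\<omega> \<notin> large_Y \<alpha>"
      then have "2 / sqrt \<alpha> < \<bar>X \<omega> - c\<bar>" "\<bar>Y \<omega>\<bar> \<le> sqrt \<alpha>"
        by (auto simp: small_X_def large_Y_def)
      then have "\<alpha> * (2 / sqrt \<alpha>) < \<alpha> * \<bar>X \<omega> - c\<bar>"
        using elim by (intro mult_strict_left_mono) auto
      moreover have "\<alpha> * (2 / sqrt \<alpha>) = 2 * sqrt \<alpha>"
        using elim by (metis less_imp_le real_div_sqrt times_divide_eq_right mult.commute)
      ultimately show "sqrt \<alpha> < \<bar>\<alpha> * (X \<omega> - c) + Y \<omega>\<bar>"
        using \<open>\<bar>Y \<omega>\<bar> \<le> sqrt \<alpha>\<close> elim by (simp add: abs_mult)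
    qed
    then have "prob (space M - (small_X \<alpha> \<union> large_Y \<alpha>))
        \<le> prob {\<omega> \<in> space M. sqrt \<alpha> < \<bar>\<alpha> * (X \<omega> - c) + Y \<omega>\<bar>}"
      by (intro finite_measure_mono) auto
    moreover have "prob (small_X \<alpha> \<union> large_Y \<alpha>) \<le> prob (small_X \<alpha>) + prob (large_Y \<alpha>)"
      by (intro measure_Un_le) (auto simp: small_X_def large_Y_def)
    moreover have "prob (space M - (small_X \<alpha> \<union> large_Y \<alpha>)) = 1 - prob (small_X \<alpha> \<union> large_Y \<alpha>)"
      by (intro prob_compl) (auto simp: small_X_def large_Y_def)
    ultimately show ?case by linarith
  qed
  show "\<forall>\<^sub>F \<alpha> in at_top. prob {\<omega> \<in> space M. sqrt \<alpha> < \<bar>\<alpha> * (X \<omega> - c) + Y \<omega>\<bar>} \<le> 1"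
    by simp
qed simp

lemma centered_gaussian_process_increment_no_atom:
  assumes "centered_gaussian_process M T X K" "s \<in> T" "t \<in> T"
    and variance: "K t t - K t s - K s t + K s s \<noteq> 0"
  shows "measure M {\<omega> \<in> space M. X t \<omega> - X s \<omega> = x} = 0"
proof -
  have "s \<noteq> t" using variance by auto
  define c where "c u = (if u = t then 1 else - 1 :: real)" for u
  have "finite {t, s}" "{t, s} \<subseteq> T" using assms by auto
  with assms(1) have "let Y = (\<lambda>\<omega>. \<Sum>u\<in>{t, s}. c u * X u \<omega>);
      v = (\<Sum>u\<in>{t, s}. \<Sum>v\<in>{t, s}. c u * c v * K u v)
    in if v = 0 then (AE \<omega> in M. Y \<omega> = 0) else distributed M lborel Y (normal_density 0 (sqrt v))"
    unfolding centered_gaussian_process_def by blast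
  moreover have "(\<Sum>u\<in>{t, s}. \<Sum>v\<in>{t, s}. c u * c v * K u v) = K t t - K t s - K s t + K s s"
    "(\<lambda>\<omega>. \<Sum>u\<in>{t, s}. c u * X u \<omega>) = (\<lambda>\<omega>. X t \<omega> - X s \<omega>)"
    using \<open>s \<noteq> t\<close> by (simp_all add: c_def)
  ultimately have "distributed M lborel (\<lambda>\<omega>. X t \<omega> - X s \<omega>)
      (normal_density 0 (sqrt (K t t - K t s - K s t + K s s)))"
    using variance by (simp add: Let_def)
  then have "emeasure M ((\<lambda>\<omega>. X t \<omega> - X s \<omega>) -` {x} \<inter> space M)
      = (\<integral>\<^sup>+y. ennreal (normal_density 0 (sqrt (K t t - K t s - K s t + K s s)) y) * indicator {x} y \<partial>lborel)"
    by (rule distributed_emeasure) simp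
  also have "\<dots> = 0"
    by (intro nn_integral_null_set) (simp add: finite_imp_null_set_lborel)
  finally show ?thesis by (simp add: measure_def vimage_def Int_def conj_commute)
qed

lemma measurable_path_of:
  assumes "\<And>t. t \<in> {0..1} \<Longrightarrow> X t \<in> borel_measurable M"
  shows "path_of X \<in> measurable M path_space"
  unfolding path_of_def path_space_def by (rule measurable_restrict) (use assms in auto)

lemma measurable_incr_vec: "incr_vec n \<in> measurable path_space (PiM {..<n} (\<lambda>_. borel))"
  unfolding incr_vec_def path_space_def
proof (rule measurable_restrict)
  have component: "(\<lambda>\<omega>. \<omega> a) \<in> borel_measurable (PiM {0..1} (\<lambda>_. borel))" if "a \<in> {0..1}" for a :: real
    using that by (rule measurable_component_singleton)
  fix i assume "i \<in> {..<n}"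
  then have grid: "real (Suc i) / real n \<in> {0..1}" "real i / real n \<in> {0..1}"
    by (auto simp: field_simps)
  show "(\<lambda>\<omega> :: real \<Rightarrow> real. \<omega> (real (Suc i) / real n) - \<omega> (real i / real n)) \<in> borel_measurable (PiM {0..1} (\<lambda>_. borel))"
    by (intro borel_measurable_diff component grid)
qed

lemma incr_vec_path_of:
  "i < n \<Longrightarrow> incr_vec n (path_of X \<omega>) i = X (real (Suc i) / real n) \<omega> - X (real i / real n) \<omega>"
  by (auto simp: incr_vec_def path_of_def field_simps)

lemma incr_vec_in_space [simp]: "incr_vec n \<omega> \<in> space (PiM {..<n} (\<lambda>_. borel))"
  by (simp add: incr_vec_def space_PiM)

lemma sets_incr_sigma:
  "A \<in> sets (PiM {..<n} (\<lambda>_. borel)) \<Longrightarrow> incr_vec n -` A \<inter> space path_space \<in> sets (incr_sigma n)"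
  unfolding incr_sigma_def by (rule in_vimage_algebra)

lemma subalgebra_distr_incr_sigma: "subalgebra (distr M path_space f) (incr_sigma n)"
  using sets_image_in_sets[OF refl measurable_incr_vec, of n]
  by (simp add: subalgebra_def incr_sigma_def)

lemma measure_restr_incr_sigma:
  assumes "f \<in> measurable M path_space" "A \<in> sets (PiM {..<n} (\<lambda>_. borel))"
  shows "measure (restr_to_subalg (distr M path_space f) (incr_sigma n)) (incr_vec n -` A \<inter> space path_space)
    = measure M {\<omega> \<in> space M. incr_vec n (f \<omega>) \<in> A}"
proof -
  have "incr_vec n -` A \<inter> space path_space \<in> sets path_space"
    using measurable_incr_vec assms(2) by (rule measurable_sets)
  moreover have "f -` (incr_vec n -` A \<inter> space path_space) \<inter> space M
      = {\<omega> \<in> space M. incr_vec n (f \<omega>) \<in> A}"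
    using measurable_space[OF assms(1)] by auto
  ultimately show ?thesis
    using assms by (simp add: measure_def emeasure_restr_to_subalg subalgebra_distr_incr_sigma
        sets_incr_sigma emeasure_distr)
qed

lemma rel_entropy_incr_sigma_tendsto_PInfty:
  assumes "prob_space M" "prob_space N" "0 < c"
    and [measurable]: "\<And>\<alpha>. f \<alpha> \<in> measurable M path_space" "\<And>\<alpha>. g \<alpha> \<in> measurable N path_space"
    and "\<And>\<alpha>. A \<alpha> \<in> sets (PiM {..<n} (\<lambda>_. borel))"
    and "\<forall>\<^sub>F \<alpha> in F. c \<le> measure M {\<omega> \<in> space M. incr_vec n (f \<alpha> \<omega>) \<in> A \<alpha>}"
    and "((\<lambda>\<alpha>. measure N {\<omega> \<in> space N. incr_vec n (g \<alpha> \<omega>) \<in> A \<alpha>}) \<longlongrightarrow> 0) F"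
  shows "((\<lambda>\<alpha>. rel_entropy (restr_to_subalg (distr M path_space (f \<alpha>)) (incr_sigma n))
                          (restr_to_subalg (distr N path_space (g \<alpha>)) (incr_sigma n))) \<longlongrightarrow> \<infinity>) F"
proof (rule rel_entropy_tendsto_PInfty[where A="\<lambda>\<alpha>. incr_vec n -` A \<alpha> \<inter> space path_space"])
  have "prob_space (restr_to_subalg (distr N path_space (g \<alpha>)) (incr_sigma n))" for \<alpha>
    by (intro prob_space_restr_to_subalg subalgebra_distr_incr_sigma
        prob_space.prob_space_distr[OF \<open>prob_space N\<close>]) simp
  with assms(7) show "\<forall>\<^sub>F \<alpha> in F. incr_vec n -` A \<alpha> \<inter> space path_space
      \<in> sets (restr_to_subalg (distr M path_space (f \<alpha>)) (incr_sigma n))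
    \<and> prob_space (restr_to_subalg (distr N path_space (g \<alpha>)) (incr_sigma n))
    \<and> c \<le> measure (restr_to_subalg (distr M path_space (f \<alpha>)) (incr_sigma n))
           (incr_vec n -` A \<alpha> \<inter> space path_space)"
    by (simp add: sets_restr_to_subalg subalgebra_distr_incr_sigma sets_incr_sigma assms(6)
        measure_restr_incr_sigma)
  show "((\<lambda>\<alpha>. measure (restr_to_subalg (distr N path_space (g \<alpha>)) (incr_sigma n))
           (incr_vec n -` A \<alpha> \<inter> space path_space)) \<longlongrightarrow> 0) F"
    using assms(8) by (simp add: assms(6) measure_restr_incr_sigma)
qed fact

lemma std_BM_measurable: "std_BM M B \<Longrightarrow> t \<in> {0..1} \<Longrightarrow> B t \<in> borel_measurable M"
  by (simp add: std_BM_def centered_gaussian_process_def)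

lemma fBM_measurable: "fBM H M Z \<Longrightarrow> t \<in> {0..1} \<Longrightarrow> Z t \<in> borel_measurable M"
  by (simp add: fBM_def centered_gaussian_process_def)

lemma (in prob_space) prob_sqrt_less_abs_scaled_fBM_BM_increment_tendsto_1:
  assumes "std_BM M B" "fBM H M Z" "0 < h" "h \<le> 1"
  shows "((\<lambda>\<alpha>. prob {\<omega> \<in> space M. sqrt \<alpha> < \<bar>(\<alpha> * Z h \<omega> + B h \<omega>) - (\<alpha> * Z 0 \<omega> + B 0 \<omega>) + \<alpha> * d\<bar>})
    \<longlongrightarrow> 1) at_top"
proof -
  have [measurable]: "B t \<in> borel_measurable M" "Z t \<in> borel_measurable M" if "t \<in> {0..1}" for t
    using assms that by (auto intro: std_BM_measurable fBM_measurable)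
  have "prob {\<omega> \<in> space M. Z h \<omega> - Z 0 \<omega> = - d} = 0"
    using assms(2-4) unfolding fBM_def
    by (intro centered_gaussian_process_increment_no_atom[where T="{0..1}"]) auto
  then have "((\<lambda>\<alpha>. prob {\<omega> \<in> space M. sqrt \<alpha> < \<bar>\<alpha> * (Z h \<omega> - Z 0 \<omega> - (- d)) + (B h \<omega> - B 0 \<omega>)\<bar>})
    \<longlongrightarrow> 1) at_top"
    using assms(3,4) by (intro prob_sqrt_less_abs_scale_add_tendsto_1) auto
  then show ?thesis by (simp add: algebra_simps)
qed

theorem lemma3p3:
  fixes H \<mu> \<sigma> :: real and M :: "'a measure" and N :: "'b measure"
    and B Z :: "real \<Rightarrow> 'a \<Rightarrow> real" and W :: "real \<Rightarrow> 'b \<Rightarrow> real" and n :: nat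
  assumes "3/4 < H" "H < 1" "\<sigma> > 0"
    and "prob_space M" "std_BM M B" "fBM H M Z"
    and "prob_space.indep_var M path_space (path_of B) path_space (path_of Z)"
    and "prob_space N" "std_BM N W"
    and "n > 1"
  shows "((\<lambda>\<alpha>. rel_entropy
            (restr_to_subalg (distr M path_space (path_of (\<lambda>t \<omega>. \<alpha> * Z t \<omega> + B t \<omega>))) (incr_sigma n))
            (restr_to_subalg (distr N path_space (path_of (\<lambda>t \<omega>. W t \<omega> - \<mu> * \<alpha> / \<sigma> * t))) (incr_sigma n)))
          \<longlongrightarrow> (\<infinity>::ereal)) at_top"
proof -
  interpret M: prob_space M by fact
  interpret N: prob_space N by fact
  define h where "h = 1 / real n"
  define A where
    "A \<alpha> = {y \<in> space (PiM {..<n} (\<lambda>_. borel)). sqrt \<alpha> < \<bar>y 0 + \<alpha> * (\<mu> / \<sigma> * h)\<bar>}" for \<alpha>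
  have "0 < h" "h \<le> 1" using \<open>n > 1\<close> by (auto simp: h_def)
  have [measurable]: "B t \<in> borel_measurable M" "Z t \<in> borel_measurable M" "W t \<in> borel_measurable N"
    if "t \<in> {0..1}" for t
    using assms that by (auto intro: std_BM_measurable fBM_measurable)
  have "(\<lambda>y. y 0) \<in> borel_measurable (PiM {..<n} (\<lambda>_. borel))"
    using \<open>n > 1\<close> by (intro measurable_component_singleton) auto
  then have A_sets: "A \<alpha> \<in> sets (PiM {..<n} (\<lambda>_. borel))" for \<alpha>
    unfolding A_def by measurable
  have lower: "\<forall>\<^sub>F \<alpha> in at_top. 1/2 \<le> measure M
      {\<omega> \<in> space M. incr_vec n (path_of (\<lambda>t \<omega>. \<alpha> * Z t \<omega> + B t \<omega>) \<omega>) \<in> A \<alpha>}"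
    using order_tendstoD(1)[OF M.prob_sqrt_less_abs_scaled_fBM_BM_increment_tendsto_1
        [OF assms(5,6) \<open>0 < h\<close> \<open>h \<le> 1\<close>, where d="\<mu> / \<sigma> * h"], of "1/2"] \<open>n > 1\<close>
    by (auto simp: A_def incr_vec_path_of simp flip: h_def elim!: eventually_mono)
  have upper: "((\<lambda>\<alpha>. measure N
      {\<omega> \<in> space N. incr_vec n (path_of (\<lambda>t \<omega>. W t \<omega> - \<mu> * \<alpha> / \<sigma> * t) \<omega>) \<in> A \<alpha>}) \<longlongrightarrow> 0) at_top"
    using filterlim_compose[OF N.prob_abs_gt_tendsto_0 sqrt_at_top, of "\<lambda>\<omega>. W h \<omega> - W 0 \<omega>"]
      \<open>n > 1\<close> \<open>0 < h\<close> \<open>h \<le> 1\<close>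
    by (simp add: A_def h_def incr_vec_path_of algebra_simps)
  show ?thesis
    by (rule rel_entropy_incr_sigma_tendsto_PInfty[OF assms(4,8) _ _ _ A_sets lower upper])
      (auto intro!: measurable_path_of)
qed

end
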